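(* For every integer $k\ge 1$ let $P_k$ be the $2^k\times 2^k$ matrix with $(i,j)$-entry $1$ if there is $n\in\{1,\dots,2^k\}$ with $i=\sigma^{-1}_{2^k}(n+1)$ and $j=\sigma^{-1}_{2^k}(n)$ (convention $\sigma^{-1}_{2^k}(2^k+1)=\sigma^{-1}_{2^k}(1)$), and $0$ otherwise. Define matrices $N_k$ by $N_1=I^*_2$, $N_2=\begin{pmatrix}0 & I_2\\ I^*_2 & 0\end{pmatrix}$ and, for $k\ge 3$, $$N_k=\begin{pmatrix}0_{2^{k-1}} & \begin{pmatrix} N_{k-2} & 0\\ 0 & I_{2^{k-2}}\end{pmatrix}\\ I^*_{2^{k-1}} & 0_{2^{k-1}}\end{pmatrix},$$ all blocks in the outer matrix being of size $2^{k-1}\times 2^{k-1}$. That is, the matrix has the nested form: its lower-left $2^{k-1}$ block is $I^*_{2^{k-1}}$, its upper-right $2^{k-1}$ block is block-diagonal with lower diagonal block $I_{2^{k-2}}$ and upper diagonal block of the same nested form of size $2^{k-2}$, and so on, the innermost block being $\begin{pmatrix}0&I_2\\ I^*_2&0\end{pmatrix}$ when $k$ is even and $I^*_2=\begin{pmatrix}0&1\\1&0\end{pmatrix}$ when $k$ is odd. Then $P_k=N_k$ for every $k\ge 1$.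
   Context: For every integer $k\ge 0$ the map $\sigma^{-1}_{2^k}:\{1,\dots,2^k\}\to\{1,\dots,2^k\}$ is defined recursively by $\sigma^{-1}_{2^0}(1)=1$ and, for $k\ge 1$ and $1\le n\le 2^{k-1}$, $\sigma^{-1}_{2^k}(2n-1)=\sigma^{-1}_{2^{k-1}}(n)$ and $\sigma^{-1}_{2^k}(2n)=2^k+1-\sigma^{-1}_{2^{k-1}}(n)$; it is a permutation of $\{1,\dots,2^k\}$ (the inverse of the permutation encoding the ordering of the superstable $2^k$-periodic orbit of a period-doubling cascade of a unimodal map). The matrix $P_k$ is called the matrix representation of the period-doubling cascade. For $r\ge 1$, $I_r$ is the $r\times r$ identity matrix, $0_r$ the $r\times r$ zero matrix, and $I^*_r=(a_{ij})$ the $r\times r$ matrix with $a_{ij}=1$ if $i+j=r+1$ and $a_{ij}=0$ otherwise. *)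

theory Defs
  imports "Jordan_Normal_Form.Matrix"
begin

text \<open>sigma_inv k n is the paper's inverse permutation of order 2^k, evaluated at n in 1..2^k
  (1-based).  Values outside 1..2^k are irrelevant.\<close>
fun sigma_inv :: "nat \<Rightarrow> nat \<Rightarrow> nat" where
  "sigma_inv 0 n = 1"
| "sigma_inv (Suc k) n =
     (if odd n then sigma_inv k ((n + 1) div 2)
      else 2 ^ Suc k + 1 - sigma_inv k (n div 2))"

definition sigma_inv_cyc :: "nat \<Rightarrow> nat \<Rightarrow> nat" where
  "sigma_inv_cyc k n = (if n = 2 ^ k + 1 then sigma_inv k 1 else sigma_inv k n)"

text \<open>Matrices are 0-indexed in Jordan_Normal_Form; entry (i,j) of the library matrix is the
  paper's entry (i+1, j+1).\<close>
definition P_mat :: "nat \<Rightarrow> int mat" where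
  "P_mat k = mat (2 ^ k) (2 ^ k) (\<lambda>(i, j).
     if \<exists>n \<in> {1..2 ^ k}. i + 1 = sigma_inv_cyc k (n + 1) \<and> j + 1 = sigma_inv k n
     then 1 else 0)"

definition anti_id :: "nat \<Rightarrow> int mat" where
  "anti_id r = mat r r (\<lambda>(i, j). if (i + 1) + (j + 1) = r + 1 then 1 else 0)"

fun N_mat :: "nat \<Rightarrow> int mat" where
  "N_mat 0 = 1\<^sub>m 1"
| "N_mat (Suc 0) = anti_id 2"
| "N_mat (Suc (Suc 0)) = four_block_mat (0\<^sub>m 2 2) (1\<^sub>m 2) (anti_id 2) (0\<^sub>m 2 2)"
| "N_mat (Suc (Suc (Suc k))) =
     four_block_mat (0\<^sub>m (2 ^ (k + 2)) (2 ^ (k + 2)))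
       (four_block_mat (N_mat (Suc k)) (0\<^sub>m (2 ^ (k + 1)) (2 ^ (k + 1)))
                       (0\<^sub>m (2 ^ (k + 1)) (2 ^ (k + 1))) (1\<^sub>m (2 ^ (k + 1))))
       (anti_id (2 ^ (k + 2))) (0\<^sub>m (2 ^ (k + 2)) (2 ^ (k + 2)))"

end

theory Submission
  imports Defs
begin

text \<open>Both matrices are the permutation matrix of the successor map of the superstable orbit,
  read on values: if x = sigma_inv k n then its successor is sigma_inv k (n + 1).  The recursion
  for sigma_inv shows that this successor is 2^k + 1 - x when x lies in the lower half, and is
  otherwise obtained by reflecting x into the lower half and taking the successor at level k - 1.
  Unfolding this rule twice and reading it blockwise gives the recursion for N_k: the reflection
  of the lower half is the anti-identity block, and in the upper-right block the first quarter
  carries the successor map of level k - 2 while the second quarter is left fixed.\<close>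

fun cycle_succ :: "nat \<Rightarrow> nat \<Rightarrow> nat" where
  "cycle_succ 0 x = 1"
| "cycle_succ (Suc k) x =
     (if x \<le> 2 ^ k then 2 ^ Suc k + 1 - x else cycle_succ k (2 ^ Suc k + 1 - x))"

lemma sigma_inv_range: "n \<in> {1..2 ^ k} \<Longrightarrow> sigma_inv k n \<in> {1..2 ^ k}"
proof (induction k arbitrary: n)
  case 0
  then show ?case by simp
next
  case (Suc k)
  show ?case
  proof (cases "odd n")
    case True
    then have "n \<noteq> 2 ^ Suc k" by auto
    then have "(n + 1) div 2 \<in> {1..2 ^ k}" using Suc.prems True by auto
    then show ?thesis using Suc.IH True by force
  next
    case False
    then have "n div 2 \<in> {1..2 ^ k}" using Suc.prems by auto
    then show ?thesis using Suc.IH[of "n div 2"] False by auto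
  qed
qed

lemma sigma_inv_surj: "x \<in> {1..2 ^ k} \<Longrightarrow> \<exists>n \<in> {1..2 ^ k}. sigma_inv k n = x"
proof (induction k arbitrary: x)
  case 0
  then show ?case by auto
next
  case (Suc k)
  show ?case
  proof (cases "x \<le> 2 ^ k")
    case True
    then obtain n where n: "n \<in> {1..2 ^ k}" "sigma_inv k n = x"
      using Suc.IH Suc.prems by force
    then have "sigma_inv (Suc k) (2 * n - 1) = x" by (simp add: odd_pos)
    moreover have "2 * n - 1 \<in> {1..2 ^ Suc k}" using n by auto
    ultimately show ?thesis by blast
  next
    case False
    then obtain n where n: "n \<in> {1..2 ^ k}" "sigma_inv k n = 2 ^ Suc k + 1 - x"
      using Suc.IH[of "2 ^ Suc k + 1 - x"] Suc.prems by force
    then have "sigma_inv (Suc k) (2 * n) = x" using False Suc.prems by auto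
    moreover have "2 * n \<in> {1..2 ^ Suc k}" using n by auto
    ultimately show ?thesis by blast
  qed
qed

lemma cycle_succ_range: "x \<in> {1..2 ^ k} \<Longrightarrow> cycle_succ k x \<in> {1..2 ^ k}"
proof (induction k arbitrary: x)
  case 0
  then show ?case by simp
next
  case (Suc k)
  show ?case
  proof (cases "x \<le> 2 ^ k")
    case False
    then have "2 ^ Suc k + 1 - x \<in> {1..2 ^ k}" using Suc.prems by auto
    then have "cycle_succ k (2 ^ Suc k + 1 - x) \<in> {1..2 ^ k}" using Suc.IH by blast
    then show ?thesis using False by auto
  qed (use Suc.prems in auto)
qed

lemma sigma_inv_cyc_Suc:
  "n \<in> {1..2 ^ k} \<Longrightarrow> sigma_inv_cyc k (n + 1) = cycle_succ k (sigma_inv k n)"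
proof (induction k arbitrary: n)
  case 0
  then show ?case by (simp add: sigma_inv_cyc_def)
next
  case (Suc k)
  show ?case
  proof (cases "odd n")
    case True
    then obtain m where m: "n = 2 * m - 1" "m \<in> {1..2 ^ k}"
      using Suc.prems by (intro that[of "(n + 1) div 2"]) (auto elim!: oddE)
    have "sigma_inv k m \<in> {1..2 ^ k}" using sigma_inv_range m(2) .
    then show ?thesis using m True by (auto simp: sigma_inv_cyc_def)
  next
    case False
    then obtain m where m: "n = 2 * m" "m \<in> {1..2 ^ k}" using Suc.prems by auto
    have "sigma_inv k m \<in> {1..2 ^ k}" using sigma_inv_range m(2) .
    then have "cycle_succ (Suc k) (sigma_inv (Suc k) n) = cycle_succ k (sigma_inv k m)"
      using m by auto
    moreover have "sigma_inv_cyc (Suc k) (n + 1) = sigma_inv_cyc k (m + 1)"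
      using m by (cases "m = 2 ^ k") (auto simp: sigma_inv_cyc_def)
    ultimately show ?thesis using Suc.IH[OF m(2)] by simp
  qed
qed

definition cycle_succ_mat :: "nat \<Rightarrow> int mat" where
  "cycle_succ_mat k =
     mat (2 ^ k) (2 ^ k) (\<lambda>(i, j). if i + 1 = cycle_succ k (j + 1) then 1 else 0)"

lemma P_mat_eq_cycle_succ_mat: "P_mat k = cycle_succ_mat k"
proof (rule eq_matI)
  fix i j
  assume "i < dim_row (cycle_succ_mat k)" "j < dim_col (cycle_succ_mat k)"
  then have ij: "i < 2 ^ k" "j < 2 ^ k" by (auto simp: cycle_succ_mat_def)
  obtain m where m: "m \<in> {1..2 ^ k}" "sigma_inv k m = j + 1"
    using sigma_inv_surj[of "j + 1" k] ij by auto
  have "(\<exists>n \<in> {1..2 ^ k}. i + 1 = sigma_inv_cyc k (n + 1) \<and> j + 1 = sigma_inv k n)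
        \<longleftrightarrow> i + 1 = cycle_succ k (j + 1)"
  proof
    assume "i + 1 = cycle_succ k (j + 1)"
    then show "\<exists>n \<in> {1..2 ^ k}. i + 1 = sigma_inv_cyc k (n + 1) \<and> j + 1 = sigma_inv k n"
      using m sigma_inv_cyc_Suc by force
  qed (use sigma_inv_cyc_Suc in force)
  then show "P_mat k $$ (i, j) = cycle_succ_mat k $$ (i, j)"
    using ij by (simp add: P_mat_def cycle_succ_mat_def)
qed (simp_all add: P_mat_def cycle_succ_mat_def)

lemma cycle_succ_Suc_Suc_Suc:
  fixes k j :: nat
  defines "H \<equiv> 2 ^ (k + 2)" and "Q \<equiv> 2 ^ (k + 1)"
  assumes "j < 2 * H"
  shows "cycle_succ (Suc (Suc (Suc k))) (j + 1) =
    (if j < H then 2 * H - j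
     else if j < H + Q then cycle_succ (Suc k) (j - H + 1)
     else j + 1 - H)"
proof -
  have HQ: "H = 2 * Q" by (simp add: H_def Q_def)
  have outer: "cycle_succ (Suc (Suc (Suc k))) (j + 1) =
      (if j < H then 2 * H - j else cycle_succ (Suc (Suc k)) (2 * H - j))"
    using cycle_succ.simps(2)[of "Suc (Suc k)" "j + 1"] by (simp add: H_def del: cycle_succ.simps)
  have inner: "cycle_succ (Suc (Suc k)) x =
      (if x \<le> Q then H + 1 - x else cycle_succ (Suc k) (H + 1 - x))" for x
    by (simp add: H_def Q_def)
  show ?thesis
    unfolding outer inner using assms(3) HQ by (auto simp: Suc_diff_le)
qed

lemma N_mat_eq_cycle_succ_mat_step:
  assumes IH: "N_mat (Suc k) = cycle_succ_mat (Suc k)"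
  shows "N_mat (Suc (Suc (Suc k))) = cycle_succ_mat (Suc (Suc (Suc k)))"
proof -
  define H :: nat where "H = 2 ^ (k + 2)"
  define Q :: nat where "Q = 2 ^ (k + 1)"
  have HQ: "H = 2 * Q" by (simp add: H_def Q_def)
  have N: "N_mat (Suc (Suc (Suc k))) =
      four_block_mat (0\<^sub>m H H)
        (four_block_mat (cycle_succ_mat (Suc k)) (0\<^sub>m Q Q) (0\<^sub>m Q Q) (1\<^sub>m Q))
        (anti_id H) (0\<^sub>m H H)"
    using IH by (simp add: H_def Q_def)
  have inner: "cycle_succ_mat (Suc k) =
      mat Q Q (\<lambda>(i, j). if i + 1 = cycle_succ (Suc k) (j + 1) then 1 else 0)"
    by (simp add: cycle_succ_mat_def Q_def)
  show ?thesis
  proof (rule eq_matI)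
    fix i j
    assume "i < dim_row (cycle_succ_mat (Suc (Suc (Suc k))))"
      "j < dim_col (cycle_succ_mat (Suc (Suc (Suc k))))"
    then have ij: "i < 2 * H" "j < 2 * H" by (auto simp: cycle_succ_mat_def H_def)
    have entry: "cycle_succ_mat (Suc (Suc (Suc k))) $$ (i, j) =
        (if i + 1 = cycle_succ (Suc (Suc (Suc k))) (j + 1) then 1 else 0)"
      using ij by (simp add: cycle_succ_mat_def H_def del: cycle_succ.simps)
    have succ: "cycle_succ (Suc (Suc (Suc k))) (j + 1) =
        (if j < H then 2 * H - j
         else if j < H + Q then cycle_succ (Suc k) (j - H + 1)
         else j + 1 - H)"
      using cycle_succ_Suc_Suc_Suc[of j k] ij(2) by (simp add: H_def Q_def)
    consider "j < H" | "H \<le> j" "j < H + Q" | "H + Q \<le> j" by linarith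
    then show "N_mat (Suc (Suc (Suc k))) $$ (i, j) = cycle_succ_mat (Suc (Suc (Suc k))) $$ (i, j)"
    proof cases
      case 1
      then show ?thesis unfolding N entry succ using ij by (auto simp: anti_id_def HQ)
    next
      case 2
      have "cycle_succ (Suc k) (j - H + 1) \<in> {1..Q}"
        using cycle_succ_range[of "j - H + 1" "Suc k"] 2 by (simp add: Q_def)
      then show ?thesis unfolding N entry succ inner using ij 2 by (auto simp: HQ)
    next
      case 3
      then show ?thesis unfolding N entry succ inner using ij by (auto simp: HQ)
    qed
  qed (simp_all add: N cycle_succ_mat_def anti_id_def HQ H_def Q_def)
qed

lemma N_mat_eq_cycle_succ_mat: "k \<ge> 1 \<Longrightarrow> N_mat k = cycle_succ_mat k"
proof (induction k rule: N_mat.induct)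
  case 2
  show ?case
    by (rule eq_matI) (auto simp: cycle_succ_mat_def anti_id_def less_2_cases_iff)
next
  case 3
  have "i < 4 \<Longrightarrow> i = 0 \<or> i = 1 \<or> i = 2 \<or> i = 3" for i :: nat by auto
  then show ?case
    by (intro eq_matI) (auto simp: cycle_succ_mat_def anti_id_def numeral_eq_Suc)
next
  case (4 k)
  then show ?case by (intro N_mat_eq_cycle_succ_mat_step) simp
qed simp

theorem theorem3:
  fixes k :: nat
  assumes "k \<ge> 1"
  shows "P_mat k = N_mat k"
  using P_mat_eq_cycle_succ_mat N_mat_eq_cycle_succ_mat assms by simp

end
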